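(* Let $\underline\rho=(\rho_1,\dots,\rho_\ell)$ be a non-decreasing tuple of integers with $\rho_1\ge2$, and let $n$ be an integer. Then there exists a changemaker vector $\bm\sigma$ with stable coefficients $\underline\rho$ and $\bm\sigma\cdot\bm\sigma=n$ if and only if $n\ge N-1$, where \[ N=\sum_{i=1}^\ell\rho_i^2+\max_{1\le k\le\ell}\Big(\rho_k-\sum_{i=1}^{k-1}\rho_i\Big). \]
   Context: A changemaker vector is a nonzero $\bm\sigma\in\mathbb{Z}^r$ (standard pairing) such that for some orthonormal basis $\bm e_1,\dots,\bm e_r$, $\bm\sigma=\sum\sigma_i\bm e_i$ with $\sigma_1=1$ and $\sigma_{i-1}\le\sigma_i\le1+\sigma_1+\dots+\sigma_{i-1}$ for $i=2,\dots,r$. If $m$ is minimal with $\sigma_m\ge2$, the stable coefficients of $\bm\sigma$ are the tuple $(\sigma_m,\dots,\sigma_r)$. *)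

theory Defs
  imports Main
begin

text \<open>Vectors of Z^r are represented as int lists of length r, with the standard pairing.\<close>

definition dotp :: "int list \<Rightarrow> int list \<Rightarrow> int" where
  "dotp x y = sum_list (map2 (*) x y)"

definition orthonormal_basis :: "nat \<Rightarrow> int list list \<Rightarrow> bool" where
  "orthonormal_basis r es \<longleftrightarrow> length es = r \<and> (\<forall>e\<in>set es. length e = r) \<and>
     (\<forall>i<r. \<forall>j<r. dotp (es!i) (es!j) = (if i = j then 1 else 0))"

definition lincomb :: "nat \<Rightarrow> int list \<Rightarrow> int list list \<Rightarrow> int list" where
  "lincomb r c es = map (\<lambda>j. \<Sum>i<length c. c!i * (es!i)!j) [0..<r]"

text \<open>Changemaker conditions on a coefficient tuple (sigma_1,...,sigma_r) (0-indexed here).\<close>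
definition changemaker_coeffs :: "int list \<Rightarrow> bool" where
  "changemaker_coeffs c \<longleftrightarrow> c \<noteq> [] \<and> c!0 = 1 \<and>
     (\<forall>i. 1 \<le> i \<and> i < length c \<longrightarrow> c!(i-1) \<le> c!i \<and> c!i \<le> 1 + sum_list (take i c))"

definition changemaker_rep :: "int list \<Rightarrow> int list \<Rightarrow> int list list \<Rightarrow> bool" where
  "changemaker_rep v c es \<longleftrightarrow> v \<noteq> replicate (length v) 0 \<and>
     orthonormal_basis (length v) es \<and> length c = length v \<and>
     changemaker_coeffs c \<and> v = lincomb (length v) c es"

definition changemaker :: "int list \<Rightarrow> bool" where
  "changemaker v \<longleftrightarrow> (\<exists>c es. changemaker_rep v c es)"

definition stable_coeffs :: "int list \<Rightarrow> int list" where
  "stable_coeffs c = (if \<exists>i<length c. c!i \<ge> 2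
      then drop (LEAST i. i < length c \<and> c!i \<ge> 2) c else [])"

definition bound_N :: "int list \<Rightarrow> int" where
  "bound_N \<rho> = (\<Sum>i<length \<rho>. (\<rho>!i)^2) +
     Max {\<rho>!k - sum_list (take k \<rho>) | k. k < length \<rho>}"

end

theory Submission
  imports Defs
begin

text \<open>An orthonormal change of basis preserves the pairing, so a changemaker vector has norm
  sigma_1^2 + ... + sigma_r^2. The coefficients before the first one exceeding 1 all equal 1, so
  the coefficient tuple is (1, ..., 1, rho) with m >= 1 leading ones, and its norm is
  m + rho_1^2 + ... + rho_l^2. For a tuple of this shape the changemaker inequalities reduce to
  rho_k - (rho_1 + ... + rho_(k-1)) <= m + 1 for all k, i.e. to m >= N - 1 - (rho_1^2 + ... + rho_l^2),
  and every such tuple is realised in the standard basis.\<close>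

lemma dotp_conv_sum_nth:
  "length x = length y \<Longrightarrow> dotp x y = (\<Sum>j<length x. x!j * y!j)"
  unfolding dotp_def by (simp add: sum_list_sum_nth atLeast0LessThan)

lemma dotp_lincomb_lincomb:
  assumes ob: "orthonormal_basis r es" and c: "length c = r" and d: "length d = r"
  shows "dotp (lincomb r c es) (lincomb r d es) = dotp c d"
proof -
  have len: "length (lincomb r x es) = r" for x unfolding lincomb_def by simp
  have nth: "lincomb r x es ! j = (\<Sum>i<r. x!i * es!i!j)" if "length x = r" "j < r" for x j
    using that unfolding lincomb_def by simp
  have "dotp (lincomb r c es) (lincomb r d es)
      = (\<Sum>j<r. (\<Sum>i<r. c!i * es!i!j) * (\<Sum>k<r. d!k * es!k!j))"
    by (simp add: dotp_conv_sum_nth len nth c d)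
  also have "\<dots> = (\<Sum>j<r. \<Sum>i<r. \<Sum>k<r. c!i * d!k * (es!i!j * es!k!j))"
    by (simp add: sum_product algebra_simps)
  also have "\<dots> = (\<Sum>i<r. \<Sum>k<r. \<Sum>j<r. c!i * d!k * (es!i!j * es!k!j))"
    by (subst sum.swap) (rule sum.cong[OF refl], rule sum.swap)
  also have "\<dots> = (\<Sum>i<r. \<Sum>k<r. c!i * d!k * dotp (es!i) (es!k))"
  proof (intro sum.cong refl)
    fix i k assume "i \<in> {..<r}" "k \<in> {..<r}"
    then have "length (es!i) = r" "length (es!k) = r"
      using ob unfolding orthonormal_basis_def by auto
    then show "(\<Sum>j<r. c!i * d!k * (es!i!j * es!k!j)) = c!i * d!k * dotp (es!i) (es!k)"
      by (simp add: dotp_conv_sum_nth sum_distrib_left)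
  qed
  also have "\<dots> = (\<Sum>i<r. \<Sum>k<r. c!i * d!k * (if i = k then 1 else 0))"
    using ob unfolding orthonormal_basis_def by (intro sum.cong refl) auto
  also have "\<dots> = dotp c d"
    by (simp add: dotp_conv_sum_nth c d if_distrib sum.delta cong: if_cong)
  finally show ?thesis .
qed

lemma dotp_self_eq_sum_squares: "dotp x x = (\<Sum>a\<leftarrow>x. a\<^sup>2)"
  unfolding dotp_def by (induction x) (simp_all add: power2_eq_square)

definition unit_basis :: "nat \<Rightarrow> int list list" where
  "unit_basis r = map (\<lambda>i. map (\<lambda>j. if i = j then 1 else 0) [0..<r]) [0..<r]"

lemma orthonormal_basis_unit_basis: "orthonormal_basis r (unit_basis r)"
  unfolding orthonormal_basis_def
proof (intro conjI allI impI)
  show "length (unit_basis r) = r" "\<forall>e\<in>set (unit_basis r). length e = r"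
    by (auto simp: unit_basis_def)
  fix i j assume "i < r" "j < r"
  then show "dotp (unit_basis r ! i) (unit_basis r ! j) = (if i = j then 1 else 0)"
    by (cases "i = j")
       (auto intro!: sum.neutral simp: dotp_conv_sum_nth unit_basis_def if_distrib sum.delta
        cong: if_cong)
qed

lemma lincomb_unit_basis: "lincomb (length c) c (unit_basis (length c)) = c"
  by (rule nth_equalityI)
     (simp_all add: lincomb_def unit_basis_def if_distrib sum.delta cong: if_cong)

lemma changemaker_coeffs_ge_1:
  assumes cc: "changemaker_coeffs c" and i: "i < length c"
  shows "c!i \<ge> 1"
  using i
proof (induction i)
  case 0
  then show ?case using cc unfolding changemaker_coeffs_def by simp
next
  case (Suc i)
  then have "c!i \<le> c!Suc i" using cc unfolding changemaker_coeffs_def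
    by (metis diff_Suc_1 le_add1 plus_1_eq_Suc)
  then show ?case using Suc by simp
qed

lemma changemaker_rep_unit_basis:
  assumes "changemaker_coeffs c"
  shows "changemaker_rep c c (unit_basis (length c))"
proof -
  have "c!0 = 1" "c \<noteq> []" using assms unfolding changemaker_coeffs_def by auto
  then have "c \<noteq> replicate (length c) 0" by (metis length_greater_0_conv nth_replicate zero_neq_one)
  then show ?thesis
    using assms unfolding changemaker_rep_def
    by (simp add: orthonormal_basis_unit_basis lincomb_unit_basis)
qed

lemma changemaker_coeffs_eq_replicate_append_stable:
  assumes cc: "changemaker_coeffs c"
  obtains m where "c = replicate m 1 @ stable_coeffs c"
proof (cases "\<exists>i<length c. c!i \<ge> 2")
  case True
  define m where "m = (LEAST i. i < length c \<and> c!i \<ge> 2)"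
  have m: "m < length c" using LeastI_ex[OF True] unfolding m_def by auto
  have "take m c = replicate m 1"
  proof (rule nth_equalityI)
    fix i assume "i < length (take m c)"
    then have "i < m" by simp
    then have "\<not> (i < length c \<and> c!i \<ge> 2)" unfolding m_def by (rule not_less_Least)
    then show "take m c ! i = replicate m 1 ! i"
      using changemaker_coeffs_ge_1[OF cc, of i] \<open>i < m\<close> m by auto
  qed (use m in simp)
  then have "c = replicate m 1 @ drop m c" by (metis append_take_drop_id)
  with True that show ?thesis unfolding stable_coeffs_def m_def by simp
next
  case False
  then have "c = replicate (length c) 1"
    using changemaker_coeffs_ge_1[OF cc] by (intro nth_equalityI) (auto simp: not_le, fastforce)
  moreover have "stable_coeffs c = []" using False unfolding stable_coeffs_def by auto
  ultimately show ?thesis using that by (metis append_Nil2)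
qed

lemma stable_coeffs_replicate_append:
  assumes "\<rho> \<noteq> []" and "\<rho>!0 \<ge> 2"
  shows "stable_coeffs (replicate m 1 @ \<rho>) = \<rho>"
proof -
  let ?c = "replicate m 1 @ \<rho>"
  have "(LEAST i. i < length ?c \<and> ?c!i \<ge> 2) = m"
  proof (rule Least_equality)
    show "m < length ?c \<and> ?c!m \<ge> 2" using assms by (simp add: nth_append)
    fix i assume "i < length ?c \<and> ?c!i \<ge> 2"
    then show "m \<le> i" by (cases "i < m") (auto simp: nth_append)
  qed
  moreover have "m < length ?c \<and> ?c!m \<ge> 2" using assms by (simp add: nth_append)
  ultimately show ?thesis unfolding stable_coeffs_def by auto
qed

lemma changemaker_rep_dotp_self:
  assumes "changemaker_rep v c es"
  shows "dotp v v = dotp c c"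
  using assms dotp_lincomb_lincomb unfolding changemaker_rep_def by metis

lemma changemaker_coeffs_replicate_append_iff:
  assumes m: "1 \<le> m" and sorted: "sorted (1 # \<rho>)"
  shows "changemaker_coeffs (replicate m 1 @ \<rho>) \<longleftrightarrow>
         (\<forall>k<length \<rho>. \<rho>!k - sum_list (take k \<rho>) \<le> int m + 1)"
proof -
  let ?c = "replicate m 1 @ \<rho>"
  have "sorted ?c" using sorted by (auto simp: sorted_append)
  then have mono: "?c!(i - 1) \<le> ?c!i" if "i < length ?c" for i
    using that by (simp add: sorted_nth_mono)
  have tail: "?c!(m + k) \<le> 1 + sum_list (take (m + k) ?c) \<longleftrightarrow>
      \<rho>!k - sum_list (take k \<rho>) \<le> int m + 1" for k
    by (simp add: nth_append sum_list_replicate) arith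
  have "(\<forall>i. 1 \<le> i \<and> i < length ?c \<longrightarrow> ?c!i \<le> 1 + sum_list (take i ?c)) \<longleftrightarrow>
      (\<forall>k<length \<rho>. \<rho>!k - sum_list (take k \<rho>) \<le> int m + 1)"
  proof (intro iffI allI impI)
    fix k assume bound: "\<forall>i. 1 \<le> i \<and> i < length ?c \<longrightarrow> ?c!i \<le> 1 + sum_list (take i ?c)"
      and k: "k < length \<rho>"
    have "?c!(m + k) \<le> 1 + sum_list (take (m + k) ?c)"
      using bound[rule_format, of "m + k"] m k by simp
    then show "\<rho>!k - sum_list (take k \<rho>) \<le> int m + 1" using tail by blast
  next
    fix i assume bound: "\<forall>k<length \<rho>. \<rho>!k - sum_list (take k \<rho>) \<le> int m + 1"
      and i: "1 \<le> i \<and> i < length ?c"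
    show "?c!i \<le> 1 + sum_list (take i ?c)"
    proof (cases "i < m")
      case True
      then show ?thesis by (simp add: nth_append sum_list_replicate)
    next
      case False
      then obtain k where "i = m + k" by (metis le_add_diff_inverse not_less)
      then show ?thesis using bound i tail[of k] by simp
    qed
  qed
  then show ?thesis using m mono unfolding changemaker_coeffs_def by (auto simp: nth_append)
qed

lemma bound_N_le_iff:
  fixes m :: int
  assumes "\<rho> \<noteq> []"
  shows "bound_N \<rho> - 1 \<le> m + (\<Sum>x\<leftarrow>\<rho>. x\<^sup>2) \<longleftrightarrow>
         (\<forall>k<length \<rho>. \<rho>!k - sum_list (take k \<rho>) \<le> m + 1)"
proof -
  have "(\<Sum>i<length \<rho>. (\<rho>!i)\<^sup>2) = (\<Sum>x\<leftarrow>\<rho>. x\<^sup>2)"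
    by (simp add: sum_list_sum_nth atLeast0LessThan)
  then have "bound_N \<rho> - 1 \<le> m + (\<Sum>x\<leftarrow>\<rho>. x\<^sup>2) \<longleftrightarrow>
      Max {\<rho>!k - sum_list (take k \<rho>) | k. k < length \<rho>} \<le> m + 1"
    unfolding bound_N_def by linarith
  also have "\<dots> \<longleftrightarrow> (\<forall>k<length \<rho>. \<rho>!k - sum_list (take k \<rho>) \<le> m + 1)"
    using assms by (subst Max_le_iff) auto
  finally show ?thesis .
qed

theorem proposition3p2:
  fixes \<rho> :: "int list" and n :: int
  assumes "\<rho> \<noteq> []" and "sorted \<rho>" and "\<rho>!0 \<ge> 2"
  shows "(\<exists>v c es. changemaker_rep v c es \<and> stable_coeffs c = \<rho> \<and> dotp v v = n)
         \<longleftrightarrow> n \<ge> bound_N \<rho> - 1"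
proof -
  let ?Q = "\<Sum>x\<leftarrow>\<rho>. x\<^sup>2"
  have "1 \<le> \<rho>!i" if "i < length \<rho>" for i
    using sorted_nth_mono[OF assms(2), of 0 i] assms(3) that by simp
  then have sorted: "sorted (1 # \<rho>)"
    using assms(2) by (auto simp: in_set_conv_nth)
  have norm: "dotp (replicate m 1 @ \<rho>) (replicate m 1 @ \<rho>) = int m + ?Q" for m
    by (simp add: dotp_self_eq_sum_squares sum_list_replicate)
  show ?thesis
  proof
    assume "\<exists>v c es. changemaker_rep v c es \<and> stable_coeffs c = \<rho> \<and> dotp v v = n"
    then obtain v c es where rep: "changemaker_rep v c es"
      and "stable_coeffs c = \<rho>" and "dotp v v = n" by blast
    moreover have cc: "changemaker_coeffs c" using rep unfolding changemaker_rep_def by simp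
    ultimately obtain m where c: "c = replicate m 1 @ \<rho>" and n: "n = int m + ?Q"
      using changemaker_coeffs_eq_replicate_append_stable changemaker_rep_dotp_self norm by metis
    have "m \<ge> 1"
      using cc assms(3) unfolding c changemaker_coeffs_def by (cases m) auto
    then show "n \<ge> bound_N \<rho> - 1"
      using cc sorted assms(1) n
      by (simp add: c changemaker_coeffs_replicate_append_iff bound_N_le_iff)
  next
    assume "n \<ge> bound_N \<rho> - 1"
    then have bound: "\<forall>k<length \<rho>. \<rho>!k - sum_list (take k \<rho>) \<le> (n - ?Q) + 1"
      using bound_N_le_iff[OF assms(1), of "n - ?Q"] by simp
    define c where "c = replicate (nat (n - ?Q)) 1 @ \<rho>"
    have "n - ?Q \<ge> 1" using bound[rule_format, of 0] assms by simp
    then have "changemaker_coeffs c" and "dotp c c = n"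
      using bound sorted norm unfolding c_def
      by (simp_all add: changemaker_coeffs_replicate_append_iff)
    then show "\<exists>v c es. changemaker_rep v c es \<and> stable_coeffs c = \<rho> \<and> dotp v v = n"
      using changemaker_rep_unit_basis stable_coeffs_replicate_append assms
      unfolding c_def by blast
  qed
qed

end
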